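(* For every integer $n\ge 2$, the functional $$H_n=\sum_{i=1}^{n-1}\sum_{j=1}^{n-i}e_{i,j}^*\in\mathfrak{gl}(n)^*$$ is regular on $\mathfrak{gl}(n)$, i.e. $\dim\ker(B_{H_n})=n$.
   Context: Over $\mathbb{C}$. $e_{i,j}^*(X)=X_{i,j}$. For $f\in\mathfrak{g}^*$, $B_f(x,y)=f([x,y])$ and $\ker(B_f)=\{x\in\mathfrak{g}: f([x,y])=0\ \forall y\in\mathfrak{g}\}$. $f$ is regular if $\dim\ker(B_f)=\min_{g\in\mathfrak{g}^*}\dim\ker(B_g)$; for $\mathfrak{gl}(n)$ this minimum equals $n$. *)

theory Defs
  imports Main "HOL-Library.Function_Algebras" "HOL-Analysis.Analysis"
begin

text \<open>Elements of gl(n) over the complex numbers are represented as functions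
  nat => nat => complex, indices 1..n, vanishing outside {1..n} x {1..n}.\<close>

type_synonym cmat = "nat \<Rightarrow> nat \<Rightarrow> complex"

definition gl :: "nat \<Rightarrow> cmat set" where
  "gl n = {X. \<forall>i j. (i \<notin> {1..n} \<or> j \<notin> {1..n}) \<longrightarrow> X i j = 0}"

definition mat_mult :: "nat \<Rightarrow> cmat \<Rightarrow> cmat \<Rightarrow> cmat" where
  "mat_mult n X Y = (\<lambda>i j. \<Sum>k=1..n. X i k * Y k j)"

definition bracket :: "nat \<Rightarrow> cmat \<Rightarrow> cmat \<Rightarrow> cmat" where
  "bracket n X Y = mat_mult n X Y - mat_mult n Y X"

definition mscale :: "complex \<Rightarrow> cmat \<Rightarrow> cmat" where
  "mscale c X = (\<lambda>i j. c * X i j)"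

definition estar :: "nat \<Rightarrow> nat \<Rightarrow> cmat \<Rightarrow> complex" where
  "estar i j X = X i j"

definition kerB :: "nat \<Rightarrow> (cmat \<Rightarrow> complex) \<Rightarrow> cmat set" where
  "kerB n f = {X \<in> gl n. \<forall>Y \<in> gl n. f (bracket n X Y) = 0}"

definition H :: "nat \<Rightarrow> cmat \<Rightarrow> complex" where
  "H n = (\<lambda>X. \<Sum>i=1..n-1. \<Sum>j=1..n-i. estar i j X)"

end

theory Submission
  imports Defs
begin

text \<open>
  Writing A (H_matrix) for the 0/1 matrix with A_{i,j} = 1 iff i + j \<le> n, one has H_n(X) =
  tr(A X), and the invariance tr(A [X, Y]) = tr([A, X] Y) identifies ker(B_{H_n}) with the
  centralizer of A. The last row and column of A vanish, and its leading (n-1) x (n-1) block is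
  invertible with an inverse P (H_block_inv) of antidiagonal shape. A matrix commuting with A has
  zero last row and column apart from the corner, and commutes with P on the leading block; the
  relation P Z = Z P then forces a block whose first column vanishes to vanish column by column,
  so the centralizer embeds into the n coordinates given by the first column and the corner.
  Conversely, the vectors P^k e_1, k < n - 1, have nonzero entries at pairwise distinct pivot
  positions beyond which the earlier ones vanish, so the powers P^k together with the corner unit
  matrix are n independent matrices in the centralizer.
\<close>

lemma sum_eq_single:
  fixes g :: "'a \<Rightarrow> 'b::comm_monoid_add"
  assumes "finite S" and "\<And>l. l \<in> S \<Longrightarrow> l \<noteq> t \<Longrightarrow> g l = 0"
  shows "sum g S = (if t \<in> S then g t else 0)"
proof -
  have "sum g S = (\<Sum>l\<in>S. if l = t then g l else 0)"
    using assms(2) by (intro sum.cong) auto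
  then show ?thesis using assms(1) by simp
qed

lemma sum_delta_mult:
  fixes f :: "'a \<Rightarrow> 'b::semiring_1"
  assumes "finite S" and "c \<Longrightarrow> t \<in> S"
  shows "(\<Sum>k\<in>S. (if c \<and> k = t then 1 else 0) * f k) = (if c then f t else 0)"
  using assms by (cases c) (simp_all add: if_distrib[of "\<lambda>x. x * _"] cong: if_cong)

lemma sum_reverse3:
  "(\<Sum>i\<in>I. \<Sum>j\<in>J. \<Sum>k\<in>K. f i j k) = (\<Sum>k\<in>K. \<Sum>j\<in>J. \<Sum>i\<in>I. f i j k)"
proof -
  have "(\<Sum>i\<in>I. \<Sum>j\<in>J. \<Sum>k\<in>K. f i j k) = (\<Sum>i\<in>I. \<Sum>k\<in>K. \<Sum>j\<in>J. f i j k)"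
    by (intro sum.cong refl sum.swap)
  also have "\<dots> = (\<Sum>k\<in>K. \<Sum>i\<in>I. \<Sum>j\<in>J. f i j k)"
    by (rule sum.swap)
  also have "\<dots> = (\<Sum>k\<in>K. \<Sum>j\<in>J. \<Sum>i\<in>I. f i j k)"
    by (intro sum.cong refl sum.swap)
  finally show ?thesis .
qed

lemma mat_mult_assoc: "mat_mult n (mat_mult n X Y) Z = mat_mult n X (mat_mult n Y Z)"
  unfolding mat_mult_def
  by (simp add: fun_eq_iff sum_distrib_left sum_distrib_right mult.assoc) (rule allI, rule allI, rule sum.swap)

lemma mat_mult_add_left: "mat_mult n (X + Y) Z = mat_mult n X Z + mat_mult n Y Z"
  unfolding mat_mult_def by (simp add: fun_eq_iff algebra_simps sum.distrib)

lemma mat_mult_add_right: "mat_mult n X (Y + Z) = mat_mult n X Y + mat_mult n X Z"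
  unfolding mat_mult_def by (simp add: fun_eq_iff algebra_simps sum.distrib)

lemma mat_mult_mscale_left: "mat_mult n (mscale c X) Y = mscale c (mat_mult n X Y)"
  unfolding mat_mult_def mscale_def by (simp add: fun_eq_iff sum_distrib_left mult_ac)

lemma mat_mult_mscale_right: "mat_mult n X (mscale c Y) = mscale c (mat_mult n X Y)"
  unfolding mat_mult_def mscale_def by (simp add: fun_eq_iff sum_distrib_left mult_ac)

lemma mat_mult_gl: "X \<in> gl n \<Longrightarrow> Y \<in> gl n \<Longrightarrow> mat_mult n X Y \<in> gl n"
  unfolding gl_def mat_mult_def by auto

lemma bracket_gl: "X \<in> gl n \<Longrightarrow> Y \<in> gl n \<Longrightarrow> bracket n X Y \<in> gl n"
  unfolding bracket_def using mat_mult_gl[of X n Y] mat_mult_gl[of Y n X] by (auto simp: gl_def)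

lemma vector_space_mscale: "vector_space mscale"
  by unfold_locales (auto simp: mscale_def fun_eq_iff algebra_simps)

lemma sum_apply2: "(\<Sum>x\<in>S. f x) i j = (\<Sum>x\<in>S. f x i j :: complex)"
  by (induction S rule: infinite_finite_induct) auto

definition elem_mat :: "nat \<Rightarrow> nat \<Rightarrow> cmat" where
  "elem_mat a b = (\<lambda>i j. if i = a \<and> j = b then 1 else 0)"

lemma elem_mat_gl: "a \<in> {1..n} \<Longrightarrow> b \<in> {1..n} \<Longrightarrow> elem_mat a b \<in> gl n"
  unfolding gl_def elem_mat_def by auto

lemma in_span_elem_mat:
  assumes "finite I" and "\<And>i j. (i, j) \<notin> I \<Longrightarrow> X i j = 0"
  shows "X \<in> module.span mscale ((\<lambda>(a, b). elem_mat a b) ` I)"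
proof -
  interpret vector_space mscale by (rule vector_space_mscale)
  have "X = (\<Sum>(a, b)\<in>I. mscale (X a b) (elem_mat a b))"
  proof (intro ext)
    fix i j
    have "(\<Sum>(a, b)\<in>I. mscale (X a b) (elem_mat a b)) i j
        = (\<Sum>p\<in>I. if p = (i, j) then X i j else 0)"
      unfolding sum_apply2 by (intro sum.cong) (auto simp: mscale_def elem_mat_def split: if_splits)
    then show "X i j = (\<Sum>(a, b)\<in>I. mscale (X a b) (elem_mat a b)) i j"
      using assms by auto
  qed
  also have "\<dots> \<in> span ((\<lambda>(a, b). elem_mat a b) ` I)"
    by (intro span_sum) (auto intro: span_scale span_base)
  finally show ?thesis .
qed

definition centralizer :: "nat \<Rightarrow> cmat \<Rightarrow> cmat set" where
  "centralizer n A = {X \<in> gl n. mat_mult n A X = mat_mult n X A}"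

lemma subspace_centralizer: "module.subspace mscale (centralizer n A)"
proof -
  interpret vector_space mscale by (rule vector_space_mscale)
  have "0 \<in> centralizer n A"
    by (simp add: centralizer_def gl_def mat_mult_def fun_eq_iff)
  moreover have "X + Y \<in> centralizer n A" if "X \<in> centralizer n A" "Y \<in> centralizer n A" for X Y
    using that by (simp add: centralizer_def gl_def mat_mult_add_left mat_mult_add_right)
  moreover have "mscale c X \<in> centralizer n A" if "X \<in> centralizer n A" for c X
    using that by (simp add: centralizer_def gl_def mat_mult_mscale_left mat_mult_mscale_right)
      (simp add: mscale_def)
  ultimately show ?thesis unfolding subspace_def by blast
qed

definition trace_form :: "nat \<Rightarrow> cmat \<Rightarrow> cmat \<Rightarrow> complex" where
  "trace_form n A X = (\<Sum>i=1..n. \<Sum>j=1..n. A j i * X i j)"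

lemma trace_form_bracket:
  "trace_form n A (bracket n X Y) = trace_form n (bracket n A X) Y"
proof -
  have AXY: "(\<Sum>i=1..n. \<Sum>j=1..n. \<Sum>k=1..n. A j i * X i k * Y k j)
      = (\<Sum>i=1..n. \<Sum>j=1..n. \<Sum>k=1..n. A j k * X k i * Y i j)"
    by (rule sum_reverse3)
  have AYX: "(\<Sum>i=1..n. \<Sum>j=1..n. \<Sum>k=1..n. A j i * Y i k * X k j)
      = (\<Sum>i=1..n. \<Sum>j=1..n. \<Sum>k=1..n. X j k * A k i * Y i j)"
    by (rule sum.cong[OF refl], subst sum.swap) (simp add: mult_ac)
  have "trace_form n A (bracket n X Y)
      = (\<Sum>i=1..n. \<Sum>j=1..n. \<Sum>k=1..n. A j i * X i k * Y k j)
        - (\<Sum>i=1..n. \<Sum>j=1..n. \<Sum>k=1..n. A j i * Y i k * X k j)"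
    unfolding trace_form_def bracket_def mat_mult_def
    by (simp add: right_diff_distrib sum_subtractf sum_distrib_left mult.assoc)
  also have "\<dots> = (\<Sum>i=1..n. \<Sum>j=1..n. \<Sum>k=1..n. A j k * X k i * Y i j)
        - (\<Sum>i=1..n. \<Sum>j=1..n. \<Sum>k=1..n. X j k * A k i * Y i j)"
    by (simp only: AXY AYX)
  also have "\<dots> = trace_form n (bracket n A X) Y"
    unfolding trace_form_def bracket_def mat_mult_def
    by (simp add: left_diff_distrib sum_subtractf sum_distrib_right)
  finally show ?thesis .
qed

lemma trace_form_elem_mat:
  assumes "a \<in> {1..n}" and "b \<in> {1..n}"
  shows "trace_form n D (elem_mat a b) = D b a"
proof -
  have "(\<Sum>j=1..n. D j i * elem_mat a b i j) = (if i = a then D b a else 0)" for i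
    using assms(2) by (simp add: elem_mat_def if_distrib[of "\<lambda>x. _ * x"] cong: if_cong)
  then show ?thesis
    using assms(1) by (simp add: trace_form_def)
qed

lemma trace_form_nondegenerate:
  assumes "D \<in> gl n" and "\<forall>Y \<in> gl n. trace_form n D Y = 0"
  shows "D = 0"
proof (intro ext)
  fix i j
  show "D i j = 0 i j"
  proof (cases "i \<in> {1..n} \<and> j \<in> {1..n}")
    case True
    then show ?thesis
      using assms(2) elem_mat_gl[of j n i] trace_form_elem_mat[of j n i D] by simp
  next
    case False
    then show ?thesis using assms(1) by (auto simp: gl_def)
  qed
qed

lemma kerB_trace_form:
  assumes "A \<in> gl n"
  shows "kerB n (trace_form n A) = centralizer n A"
proof -
  have "(\<forall>Y \<in> gl n. trace_form n (bracket n A X) Y = 0) \<longleftrightarrow> bracket n A X = 0"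
    if "X \<in> gl n" for X
    using trace_form_nondegenerate[OF bracket_gl[OF assms that]]
    by (auto simp: trace_form_def)
  then show ?thesis
    unfolding kerB_def centralizer_def trace_form_bracket by (auto simp: bracket_def)
qed

definition H_matrix :: "nat \<Rightarrow> cmat" where
  "H_matrix n = (\<lambda>i j. if 1 \<le> i \<and> 1 \<le> j \<and> i + j \<le> n then 1 else 0)"

definition H_block_inv :: "nat \<Rightarrow> cmat" where
  "H_block_inv n = (\<lambda>i j. (if (1 \<le> i \<and> i \<le> n - 1) \<and> j = n - i then 1 else 0)
                         - (if (2 \<le> i \<and> i \<le> n - 1) \<and> j = n + 1 - i then 1 else 0))"

definition block_one :: "nat \<Rightarrow> cmat" where
  "block_one n = (\<lambda>i j. if 1 \<le> i \<and> i \<le> n - 1 \<and> j = i then 1 else 0)"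

lemma H_eq_trace_form: "H n = trace_form n (H_matrix n)"
proof
  fix X
  have "(\<Sum>j=1..n. H_matrix n j i * X i j) = (\<Sum>j=1..n-i. X i j)" if "i \<in> {1..n}" for i
    using that by (intro sum.mono_neutral_cong_right) (auto simp: H_matrix_def)
  then have "trace_form n (H_matrix n) X = (\<Sum>i=1..n. \<Sum>j=1..n-i. X i j)"
    unfolding trace_form_def by (rule sum.cong[OF refl])
  also have "\<dots> = (\<Sum>i=1..n-1. \<Sum>j=1..n-i. X i j)"
    by (rule sum.mono_neutral_cong_right) auto
  finally show "H n X = trace_form n (H_matrix n) X"
    by (simp add: H_def estar_def)
qed

lemma H_matrix_gl: "H_matrix n \<in> gl n"
  unfolding gl_def H_matrix_def by auto

lemma kerB_H: "kerB n (H n) = centralizer n (H_matrix n)"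
  unfolding H_eq_trace_form by (rule kerB_trace_form[OF H_matrix_gl])

lemma mat_mult_H_block_inv_left:
  "mat_mult n (H_block_inv n) Z i j
     = (if 1 \<le> i \<and> i \<le> n - 1 then Z (n - i) j else 0)
       - (if 2 \<le> i \<and> i \<le> n - 1 then Z (n + 1 - i) j else 0)"
  unfolding mat_mult_def H_block_inv_def left_diff_distrib sum_subtractf
  by (subst (1 2) sum_delta_mult) auto

lemma H_block_inv_sym: "H_block_inv n i j = H_block_inv n j i"
  unfolding H_block_inv_def by (intro arg_cong2[where f = "(-)"]) auto

lemma mat_mult_H_block_inv_right:
  "mat_mult n Z (H_block_inv n) i j
     = (if 1 \<le> j \<and> j \<le> n - 1 then Z i (n - j) else 0)
       - (if 2 \<le> j \<and> j \<le> n - 1 then Z i (n + 1 - j) else 0)"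
  using mat_mult_H_block_inv_left[of n "\<lambda>i j. Z j i" j i]
  by (simp add: mat_mult_def H_block_inv_sym[of n _ j] mult.commute)

lemma H_matrix_mult_H_block_inv: "mat_mult n (H_matrix n) (H_block_inv n) = block_one n"
proof (intro ext)
  fix i j
  show "mat_mult n (H_matrix n) (H_block_inv n) i j = block_one n i j"
    unfolding mat_mult_H_block_inv_right H_matrix_def block_one_def
    by (cases "1 \<le> j \<and> j \<le> n - 1"; cases "2 \<le> j"; cases "1 \<le> i \<and> i \<le> j"; cases "i = j";
        simp?; arith?)
qed

lemma H_block_inv_mult_H_matrix: "mat_mult n (H_block_inv n) (H_matrix n) = block_one n"
proof (intro ext)
  fix i j
  show "mat_mult n (H_block_inv n) (H_matrix n) i j = block_one n i j"
    unfolding mat_mult_H_block_inv_left H_matrix_def block_one_def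
    by (cases "1 \<le> i \<and> i \<le> n - 1"; cases "2 \<le> i"; cases "1 \<le> j \<and> j \<le> i"; cases "i = j";
        simp?; arith?)
qed

lemma mat_mult_block_one_right:
  "mat_mult n Z (block_one n) i j = (if 1 \<le> j \<and> j \<le> n - 1 then Z i j else 0)"
  unfolding mat_mult_def by (subst sum_eq_single[where t = j]) (auto simp: block_one_def)

lemma mat_mult_block_one_left:
  "mat_mult n (block_one n) Z i j = (if 1 \<le> i \<and> i \<le> n - 1 then Z i j else 0)"
  unfolding mat_mult_def by (subst sum_eq_single[where t = i]) (auto simp: block_one_def)

lemma centralizer_H_matrix_last_row:
  assumes Z: "Z \<in> centralizer n (H_matrix n)" and j: "j \<in> {1..n-1}"
  shows "Z n j = 0"
proof -
  have last_row: "mat_mult n (H_matrix n) Z n k = 0" for k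
    unfolding mat_mult_def by (simp add: H_matrix_def)
  have "Z n j = mat_mult n Z (block_one n) n j"
    using j by (simp add: mat_mult_block_one_right)
  also have "\<dots> = mat_mult n (mat_mult n Z (H_matrix n)) (H_block_inv n) n j"
    by (simp add: mat_mult_assoc H_matrix_mult_H_block_inv)
  also have "\<dots> = mat_mult n (mat_mult n (H_matrix n) Z) (H_block_inv n) n j"
    using Z by (simp add: centralizer_def)
  also have "\<dots> = 0"
    unfolding mat_mult_def[of n "mat_mult n (H_matrix n) Z"] by (simp add: last_row)
  finally show ?thesis .
qed

lemma centralizer_H_matrix_last_col:
  assumes Z: "Z \<in> centralizer n (H_matrix n)" and i: "i \<in> {1..n-1}"
  shows "Z i n = 0"
proof -
  have last_col: "mat_mult n Z (H_matrix n) k n = 0" for k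
    unfolding mat_mult_def by (simp add: H_matrix_def)
  have "Z i n = mat_mult n (block_one n) Z i n"
    using i by (simp add: mat_mult_block_one_left)
  also have "\<dots> = mat_mult n (H_block_inv n) (mat_mult n (H_matrix n) Z) i n"
    by (simp add: mat_mult_assoc[symmetric] H_block_inv_mult_H_matrix)
  also have "\<dots> = 0"
    using Z last_col by (simp add: centralizer_def mat_mult_def[of n "H_block_inv n"])
  finally show ?thesis .
qed

lemma centralizer_H_matrix_commutes_with_inv:
  assumes Z: "Z \<in> centralizer n (H_matrix n)" and "i \<in> {1..n-1}" "j \<in> {1..n-1}"
  shows "mat_mult n (H_block_inv n) Z i j = mat_mult n Z (H_block_inv n) i j"
proof -
  let ?A = "H_matrix n" and ?P = "H_block_inv n"
  have comm: "mat_mult n ?A Z = mat_mult n Z ?A"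
    using Z by (simp add: centralizer_def)
  have "mat_mult n ?P Z i j = mat_mult n (mat_mult n ?P Z) (block_one n) i j"
    using assms by (simp add: mat_mult_block_one_right)
  also have "\<dots> = mat_mult n ?P (mat_mult n (mat_mult n Z ?A) ?P) i j"
    by (simp add: mat_mult_assoc H_matrix_mult_H_block_inv)
  also have "\<dots> = mat_mult n (mat_mult n ?P ?A) (mat_mult n Z ?P) i j"
    by (simp add: comm[symmetric] mat_mult_assoc)
  also have "\<dots> = mat_mult n Z ?P i j"
    using assms by (simp add: H_block_inv_mult_H_matrix mat_mult_block_one_left)
  finally show ?thesis .
qed

definition zero_block_col :: "nat \<Rightarrow> cmat \<Rightarrow> nat \<Rightarrow> bool" where
  "zero_block_col n Z j \<longleftrightarrow> (\<forall>i \<in> {1..n-1}. Z i j = 0)"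

lemma centralizer_H_matrix_zero_block_col_shift:
  assumes Z: "Z \<in> centralizer n (H_matrix n)" and j: "j \<in> {1..n-1}"
    and zero: "zero_block_col n Z j"
  shows "zero_block_col n Z (n - j) \<longleftrightarrow> (2 \<le> j \<longrightarrow> zero_block_col n Z (n + 1 - j))"
proof -
  have "Z i (n - j) = (if 2 \<le> j then Z i (n + 1 - j) else 0)" if i: "i \<in> {1..n-1}" for i
  proof -
    have "Z (n - i) j = 0" and "2 \<le> i \<Longrightarrow> Z (n + 1 - i) j = 0"
      using i by (auto intro!: zero[unfolded zero_block_col_def, rule_format])
    then have "mat_mult n (H_block_inv n) Z i j = 0"
      by (simp add: mat_mult_H_block_inv_left)
    then have "mat_mult n Z (H_block_inv n) i j = 0"
      using centralizer_H_matrix_commutes_with_inv[OF Z i j] by simp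
    then show ?thesis
      using j by (simp add: mat_mult_H_block_inv_right split: if_splits)
  qed
  then show ?thesis by (auto simp: zero_block_col_def)
qed

lemma centralizer_H_matrix_block_eq_0:
  assumes Z: "Z \<in> centralizer n (H_matrix n)" and first_col: "zero_block_col n Z 1"
    and "i \<in> {1..n-1}" "j \<in> {1..n-1}"
  shows "Z i j = 0"
proof -
  note shift = centralizer_H_matrix_zero_block_col_shift[OF Z]
  \<comment> \<open>The zero columns propagate along 1, n-1, 2, n-2, 3, \dots\<close>
  have "zero_block_col n Z t \<and> zero_block_col n Z (n - t)" if "t \<in> {1..n-1}" for t
    using that
  proof (induction t)
    case 0
    then show ?case by simp
  next
    case (Suc t)
    show ?case
    proof (cases "t = 0")
      case True
      then show ?thesis using shift[of 1] first_col Suc.prems by simp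
    next
      case False
      then have IH: "zero_block_col n Z t" "zero_block_col n Z (n - t)"
        using Suc by auto
      have cols: "n - t \<in> {1..n-1}" "Suc t \<in> {1..n-1}" and "2 \<le> n - t" "2 \<le> Suc t"
        using Suc.prems False by auto
      moreover have "n - (n - t) = t" and "n + 1 - (n - t) = Suc t" and "n + 1 - Suc t = n - t"
        using Suc.prems by auto
      ultimately have "zero_block_col n Z (Suc t)"
        using shift[OF cols(1) IH(2)] IH(1) by simp
      then show ?thesis
        using shift[OF cols(2)] IH(2) \<open>2 \<le> Suc t\<close> by simp
    qed
  qed
  then show ?thesis using assms(3,4) by (simp add: zero_block_col_def)
qed

lemma centralizer_H_matrix_eq_0:
  assumes Z: "Z \<in> centralizer n (H_matrix n)"
    and first_col: "zero_block_col n Z 1" and corner: "Z n n = 0"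
  shows "Z = 0"
proof (intro ext)
  fix i j
  have gl: "Z \<in> gl n" using Z by (simp add: centralizer_def)
  consider "i \<in> {1..n-1}" "j \<in> {1..n-1}" | "i = n" "j \<in> {1..n-1}" | "i \<in> {1..n-1}" "j = n"
    | "i = n" "j = n" | "i \<notin> {1..n} \<or> j \<notin> {1..n}"
    by fastforce
  then show "Z i j = 0 i j"
  proof cases
    case 1
    then show ?thesis using centralizer_H_matrix_block_eq_0[OF Z first_col] by simp
  next
    case 2
    then show ?thesis using centralizer_H_matrix_last_row[OF Z] by simp
  next
    case 3
    then show ?thesis using centralizer_H_matrix_last_col[OF Z] by simp
  next
    case 4
    then show ?thesis using corner by simp
  next
    case 5
    then show ?thesis using gl by (simp add: gl_def)
  qed
qed

fun H_block_inv_power :: "nat \<Rightarrow> nat \<Rightarrow> cmat" where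
  "H_block_inv_power n 0 = block_one n"
| "H_block_inv_power n (Suc k) = mat_mult n (H_block_inv n) (H_block_inv_power n k)"

lemma H_block_inv_power_outside_block:
  "\<not> (i \<in> {1..n-1} \<and> j \<in> {1..n-1}) \<Longrightarrow> H_block_inv_power n k i j = 0"
proof (induction k arbitrary: i j)
  case 0
  then show ?case by (auto simp: block_one_def)
next
  case (Suc k)
  then show ?case by (auto simp: mat_mult_H_block_inv_left)
qed

lemma H_block_inv_power_gl: "H_block_inv_power n k \<in> gl n"
  unfolding gl_def by (auto intro!: H_block_inv_power_outside_block)

lemma H_block_inv_power_in_centralizer: "H_block_inv_power n k \<in> centralizer n (H_matrix n)"
proof -
  have "mat_mult n (H_matrix n) (H_block_inv_power n k) = mat_mult n (H_block_inv_power n k) (H_matrix n)"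
  proof (induction k)
    case 0
    show ?case
      by (intro ext) (auto simp: mat_mult_block_one_left mat_mult_block_one_right H_matrix_def)
  next
    case (Suc k)
    have "mat_mult n (H_matrix n) (H_block_inv_power n (Suc k)) = mat_mult n (block_one n) (H_block_inv_power n k)"
      by (simp add: mat_mult_assoc[symmetric] H_matrix_mult_H_block_inv)
    moreover have "mat_mult n (H_block_inv_power n (Suc k)) (H_matrix n)
        = mat_mult n (block_one n) (H_block_inv_power n k)"
      by (simp add: mat_mult_assoc Suc.IH[symmetric])
        (simp add: mat_mult_assoc[symmetric] H_block_inv_mult_H_matrix)
    ultimately show ?case by simp
  qed
  then show ?thesis by (simp add: centralizer_def H_block_inv_power_gl)
qed

lemma H_block_inv_power_Suc_entry:
  "H_block_inv_power n (Suc k) i j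
     = (if 1 \<le> i \<and> i \<le> n - 1 then H_block_inv_power n k (n - i) j else 0)
       - (if 2 \<le> i \<and> i \<le> n - 1 then H_block_inv_power n k (n + 1 - i) j else 0)"
  by (simp add: mat_mult_H_block_inv_left)

declare H_block_inv_power.simps(2) [simp del]

lemma H_block_inv_power_first_col_step_even:
  assumes "2 * s + 1 < n - 1"
    and pivot: "H_block_inv_power n (2 * s) (s + 1) 1 = (-1) ^ s"
    and zero: "\<And>i. s + 1 < i \<Longrightarrow> H_block_inv_power n (2 * s) i 1 = 0"
  shows "H_block_inv_power n (2 * s + 1) (n - 1 - s) 1 = (-1) ^ s"
    and "i < n - 1 - s \<Longrightarrow> H_block_inv_power n (2 * s + 1) i 1 = 0"
proof -
  have "n - (n - 1 - s) = s + 1" and "n + 1 - (n - 1 - s) = s + 2"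
    and "2 \<le> n - 1 - s" and "n - 1 - s \<le> n - 1"
    using assms(1) by auto
  then show "H_block_inv_power n (2 * s + 1) (n - 1 - s) 1 = (-1) ^ s"
    using assms(1) pivot zero[of "s + 2"] by (simp add: H_block_inv_power_Suc_entry)
next
  assume "i < n - 1 - s"
  have "H_block_inv_power n (2 * s) (n - i) 1 = 0"
    and "H_block_inv_power n (2 * s) (n + 1 - i) 1 = 0" if "1 \<le> i"
    using that \<open>i < n - 1 - s\<close> by (intro zero; arith)+
  then show "H_block_inv_power n (2 * s + 1) i 1 = 0"
    by (simp add: H_block_inv_power_Suc_entry)
qed

lemma H_block_inv_power_first_col_step_odd:
  assumes "2 * s + 2 < n - 1"
    and pivot: "H_block_inv_power n (2 * s + 1) (n - 1 - s) 1 = (-1) ^ s"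
    and zero: "\<And>i. i < n - 1 - s \<Longrightarrow> H_block_inv_power n (2 * s + 1) i 1 = 0"
  shows "H_block_inv_power n (2 * s + 2) (s + 2) 1 = (-1) ^ (s + 1)"
    and "s + 2 < i \<Longrightarrow> H_block_inv_power n (2 * s + 2) i 1 = 0"
proof -
  have "n - (s + 2) < n - 1 - s" and "n + 1 - (s + 2) = n - 1 - s"
    using assms(1) by auto
  then show "H_block_inv_power n (2 * s + 2) (s + 2) 1 = (-1) ^ (s + 1)"
    using assms(1) pivot zero[of "n - (s + 2)"]
    by (simp add: H_block_inv_power_Suc_entry)
next
  assume "s + 2 < i"
  have "H_block_inv_power n (2 * s + 1) (n - i) 1 = 0"
    and "H_block_inv_power n (2 * s + 1) (n + 1 - i) 1 = 0" if "i \<le> n - 1"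
    using that \<open>s + 2 < i\<close> by (intro zero; arith)+
  then show "H_block_inv_power n (2 * s + 2) i 1 = 0"
    by (simp add: H_block_inv_power_Suc_entry)
qed

definition pivot :: "nat \<Rightarrow> nat \<Rightarrow> nat" where
  "pivot n k = (if even k then k div 2 + 1 else n - 1 - k div 2)"

definition beyond_pivot :: "nat \<Rightarrow> nat \<Rightarrow> nat \<Rightarrow> bool" where
  "beyond_pivot n k i \<longleftrightarrow> (if even k then k div 2 + 1 < i else i < n - 1 - k div 2)"

lemma H_block_inv_power_first_col:
  assumes "k < n - 1"
  shows "H_block_inv_power n k (pivot n k) 1 = (-1) ^ (k div 2)
    \<and> (\<forall>i. beyond_pivot n k i \<longrightarrow> H_block_inv_power n k i 1 = 0)"
  using assms
proof (induction k)
  case 0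
  then show ?case by (simp add: pivot_def beyond_pivot_def block_one_def)
next
  case (Suc k)
  then have IH: "H_block_inv_power n k (pivot n k) 1 = (-1) ^ (k div 2)"
    "\<And>i. beyond_pivot n k i \<Longrightarrow> H_block_inv_power n k i 1 = 0"
    by simp_all
  consider s where "k = 2 * s" | s where "k = 2 * s + 1"
    by (metis evenE oddE)
  then show ?case
  proof cases
    case 1
    then show ?thesis
      using H_block_inv_power_first_col_step_even[of s n] Suc.prems IH
      by (simp add: pivot_def beyond_pivot_def)
  next
    case 2
    then show ?thesis
      using H_block_inv_power_first_col_step_odd[of s n] Suc.prems IH
      by (simp add: pivot_def beyond_pivot_def)
  qed
qed

lemma beyond_pivot_of_less: "j < k \<Longrightarrow> k < n - 1 \<Longrightarrow> beyond_pivot n j (pivot n k)"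
  by (auto simp: pivot_def beyond_pivot_def elim!: evenE oddE)

lemma H_block_inv_power_first_cols_independent:
  assumes comb: "\<And>i. (\<Sum>k<n-1. c k * H_block_inv_power n k i 1) = 0"
  shows "\<forall>k<n-1. c k = 0"
proof (rule ccontr)
  define K where "K = Max {k. k < n - 1 \<and> c k \<noteq> 0}"
  assume "\<not> (\<forall>k<n-1. c k = 0)"
  then have K: "K < n - 1" "c K \<noteq> 0" and above_K: "\<And>k. K < k \<Longrightarrow> k < n - 1 \<Longrightarrow> c k = 0"
    using Max_in[of "{k. k < n - 1 \<and> c k \<noteq> 0}"] Max_ge[of "{k. k < n - 1 \<and> c k \<noteq> 0}"]
    unfolding K_def[symmetric] by fastforce+
  have "c k * H_block_inv_power n k (pivot n K) 1 = 0" if "k < n - 1" "k \<noteq> K" for k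
  proof (cases "k < K")
    case True
    then show ?thesis
      using H_block_inv_power_first_col[OF that(1)] beyond_pivot_of_less[OF True K(1)] by simp
  next
    case False
    then show ?thesis using above_K that by simp
  qed
  then have "(\<Sum>k<n-1. c k * H_block_inv_power n k (pivot n K) 1) = c K * H_block_inv_power n K (pivot n K) 1"
    using K(1) by (intro sum_eq_single[THEN trans]) auto
  then show False
    using comb K H_block_inv_power_first_col[OF K(1)] by simp
qed

lemma (in vector_space) dim_le_card_if_inj_on_into_span:
  assumes "module_hom scale scale f" and "subspace S" and "inj_on f S"
    and "f ` S \<subseteq> span W" and "finite W"
  shows "dim S \<le> card W"
proof -
  interpret f: module_hom scale scale f by fact
  obtain C where C: "C \<subseteq> S" "independent C" "S \<subseteq> span C" "card C = dim S"
    by (rule basis_exists)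
  have "inj_on f (span C)"
    using span_minimal[OF C(1) assms(2)] assms(3) by (rule inj_on_subset[rotated])
  then have "independent (f ` C)" and "card (f ` C) = card C"
    using f.independent_injective_image[OF C(2)] card_image inj_on_subset[OF _ span_superset]
    by auto
  moreover have "f ` C \<subseteq> span W" using C(1) assms(4) by auto
  ultimately show ?thesis
    using independent_span_bound[OF assms(5)] C(4) by metis
qed

lemma (in vector_space) card_le_dim_if_in_finite_span:
  assumes "B \<subseteq> S" and "independent B" and "S \<subseteq> span W" and "finite W"
  shows "card B \<le> dim S"
proof -
  obtain C where C: "C \<subseteq> S" "independent C" "S \<subseteq> span C" "card C = dim S"
    by (rule basis_exists)
  have "finite C"
    using independent_span_bound[OF assms(4) C(2)] C(1) assms(3) by auto
  moreover have "B \<subseteq> span C" using assms(1) C(3) by blast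
  ultimately show ?thesis
    using independent_span_bound[OF _ assms(2)] C(4) by metis
qed

definition first_col_and_corner :: "nat \<Rightarrow> cmat \<Rightarrow> cmat" where
  "first_col_and_corner n X =
     (\<lambda>i j. if (j = 1 \<and> i \<in> {1..n-1}) \<or> (i = n \<and> j = n) then X i j else 0)"

lemma dim_centralizer_H_matrix_le:
  assumes "n \<ge> 1"
  shows "vector_space.dim mscale (centralizer n (H_matrix n)) \<le> n"
proof -
  interpret vector_space mscale by (rule vector_space_mscale)
  define I where "I = (\<lambda>i. (i, 1)) ` {1..n-1} \<union> {(n, n)}"
  let ?W = "(\<lambda>(a, b). elem_mat a b) ` I"
  have "module_hom mscale mscale (first_col_and_corner n)"
    unfolding module_hom_iff module_iff_vector_space
    by (auto simp: vector_space_mscale first_col_and_corner_def mscale_def fun_eq_iff)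
  moreover have "inj_on (first_col_and_corner n) (centralizer n (H_matrix n))"
  proof (rule inj_onI)
    fix X Y
    assume X: "X \<in> centralizer n (H_matrix n)" and Y: "Y \<in> centralizer n (H_matrix n)"
      and eq: "first_col_and_corner n X = first_col_and_corner n Y"
    have "X i j = Y i j" if "(j = 1 \<and> i \<in> {1..n-1}) \<or> (i = n \<and> j = n)" for i j
      using fun_cong[OF fun_cong[OF eq, of i], of j] that by (simp add: first_col_and_corner_def)
    moreover have "X - Y \<in> centralizer n (H_matrix n)"
      using subspace_centralizer X Y by (rule subspace_diff)
    ultimately have "X - Y = 0"
      by (intro centralizer_H_matrix_eq_0) (auto simp: zero_block_col_def)
    then show "X = Y" by simp
  qed
  moreover have "first_col_and_corner n ` centralizer n (H_matrix n) \<subseteq> span ?W"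
    by (intro image_subsetI in_span_elem_mat) (auto simp: I_def first_col_and_corner_def)
  moreover have "card ?W \<le> n"
  proof -
    have "card ?W \<le> card I" by (rule card_image_le) (simp add: I_def)
    also have "\<dots> \<le> card ((\<lambda>i. (i, 1 :: nat)) ` {1..n-1}) + 1"
      unfolding I_def using card_Un_le[of _ "{(n, n)}"] by simp
    also have "\<dots> \<le> n" using card_image_le[of "{1..n-1}" "\<lambda>i. (i, 1 :: nat)"] assms by simp
    finally show ?thesis .
  qed
  ultimately show ?thesis
    using dim_le_card_if_inj_on_into_span[OF _ subspace_centralizer] by (fastforce simp: I_def)
qed

lemma elem_mat_corner_in_centralizer:
  assumes "n \<ge> 1"
  shows "elem_mat n n \<in> centralizer n (H_matrix n)"
proof -
  have "mat_mult n (H_matrix n) (elem_mat n n) = 0" and "mat_mult n (elem_mat n n) (H_matrix n) = 0"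
    by (auto simp: mat_mult_def elem_mat_def H_matrix_def fun_eq_iff intro!: sum.neutral)
  then show ?thesis using elem_mat_gl[of n n n] assms by (simp add: centralizer_def)
qed

lemma inj_on_H_block_inv_power: "inj_on (H_block_inv_power n) {..<n-1}"
proof -
  have distinct: "H_block_inv_power n j \<noteq> H_block_inv_power n k" if "j < k" "k < n - 1" for j k
  proof -
    have "H_block_inv_power n j (pivot n k) 1 = 0"
      using H_block_inv_power_first_col[of j n] beyond_pivot_of_less[OF that] that by simp
    moreover have "H_block_inv_power n k (pivot n k) 1 \<noteq> 0"
      using H_block_inv_power_first_col[OF that(2)] by simp
    ultimately show ?thesis by auto
  qed
  show ?thesis
  proof (rule inj_onI)
    fix j k
    assume "j \<in> {..<n-1}" "k \<in> {..<n-1}" "H_block_inv_power n j = H_block_inv_power n k"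
    then show "j = k"
      using distinct[of j k] distinct[of k j] by (cases j k rule: linorder_cases) auto
  qed
qed

lemma H_block_inv_power_ne_corner: "H_block_inv_power n k \<noteq> elem_mat n n"
proof
  assume "H_block_inv_power n k = elem_mat n n"
  then have "H_block_inv_power n k n n = 1" by (simp add: elem_mat_def)
  then show False using H_block_inv_power_outside_block[of n n n k] by (cases "n = 0") auto
qed

lemma independent_H_block_inv_powers_and_corner:
  "\<not> module.dependent mscale (H_block_inv_power n ` {..<n-1} \<union> {elem_mat n n})"
proof
  interpret vector_space mscale by (rule vector_space_mscale)
  let ?B = "H_block_inv_power n ` {..<n-1} \<union> {elem_mat n n}"
  assume "dependent ?B"
  then obtain u where u: "\<exists>v \<in> ?B. u v \<noteq> 0" and comb: "(\<Sum>v\<in>?B. mscale (u v) v) = 0"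
    by (auto simp: dependent_finite)
  have "(\<Sum>v\<in>?B. mscale (u v) v)
      = (\<Sum>k<n-1. mscale (u (H_block_inv_power n k)) (H_block_inv_power n k))
        + mscale (u (elem_mat n n)) (elem_mat n n)"
    using H_block_inv_power_ne_corner[of n, symmetric]
    by (subst sum.union_disjoint)
      (auto simp: sum.reindex[OF inj_on_H_block_inv_power] simp del: One_nat_def)
  then have entries: "(\<Sum>k<n-1. u (H_block_inv_power n k) * H_block_inv_power n k i j)
      + u (elem_mat n n) * elem_mat n n i j = 0" for i j
    using fun_cong[OF fun_cong[OF comb, of i], of j] by (simp add: sum_apply2 mscale_def)
  have "(\<Sum>k<n-1. u (H_block_inv_power n k) * H_block_inv_power n k i 1) = 0" for i
    using entries[of i 1] by (cases "n = 1") (auto simp: elem_mat_def)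
  then have powers: "\<forall>k<n-1. u (H_block_inv_power n k) = 0"
    by (rule H_block_inv_power_first_cols_independent)
  moreover have "u (elem_mat n n) = 0"
    using entries[of n n] powers H_block_inv_power_outside_block[of n n n] by (simp add: elem_mat_def)
  ultimately show False using u by auto
qed

lemma dim_centralizer_H_matrix_ge:
  assumes "n \<ge> 1"
  shows "n \<le> vector_space.dim mscale (centralizer n (H_matrix n))"
proof -
  interpret vector_space mscale by (rule vector_space_mscale)
  let ?B = "H_block_inv_power n ` {..<n-1} \<union> {elem_mat n n}"
  have "elem_mat n n \<notin> H_block_inv_power n ` {..<n-1}"
    using H_block_inv_power_ne_corner[of n] by (metis imageE)
  then have "card ?B = n"
    using card_image[OF inj_on_H_block_inv_power, of n] assms by simp
  moreover have "?B \<subseteq> centralizer n (H_matrix n)"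
    using H_block_inv_power_in_centralizer elem_mat_corner_in_centralizer[OF assms] by auto
  moreover have "centralizer n (H_matrix n) \<subseteq> span ((\<lambda>(a, b). elem_mat a b) ` ({1..n} \<times> {1..n}))"
    by (intro subsetI in_span_elem_mat) (auto simp: centralizer_def gl_def)
  ultimately show ?thesis
    using card_le_dim_if_in_finite_span independent_H_block_inv_powers_and_corner
    by (metis finite_imageI finite_SigmaI finite_atLeastAtMost)
qed

theorem theorem3p18:
  fixes n :: nat
  assumes "n \<ge> 2"
  shows "vector_space.dim mscale (kerB n (H n)) = n"
  using dim_centralizer_H_matrix_le[of n] dim_centralizer_H_matrix_ge[of n] assms
  unfolding kerB_H by simp

end
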